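(* Let $\mu$ be the Cauchy distribution $d\mu(x)=\frac1\pi\frac{dx}{1+x^2}$, $\alpha\ge0$, $\beta>0$, $s=\alpha+\beta$. For $u_0\in\mathbb R$ let $u=f_{\alpha,\beta}(u_0)$ and $v=v_s(u_0)$. Then, regarding $u_0$ (and hence $v$) as a function of $u$, \[\frac{d}{du}\int\frac{(u_0-x)\,d\mu(x)}{(u_0-x)^2+v^2}=\frac{v(-s+2v(1+v)^2)}{(1+v)(s^2+4\alpha v^2(1+v))-(\alpha-\beta)sv}.\]
   Context: $v_s(u)=\inf\{v>0:\int\frac{d\mu(x)}{(u-x)^2+v^2}\le\frac1s\}$; $f_{\alpha,\beta}(u_0)=u_0+(\alpha-\beta)\int\frac{(u_0-x)\,d\mu(x)}{(u_0-x)^2+v_s(u_0)^2}$, a strictly increasing homeomorphism of $\mathbb R$. *)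

theory Defs
  imports "HOL-Probability.Probability"
begin

definition cauchy_mu :: "real measure" where
  "cauchy_mu = density lborel (\<lambda>x. ennreal (1 / (pi * (1 + x\<^sup>2))))"

definition v_s :: "real \<Rightarrow> real \<Rightarrow> real" where
  "v_s s u = Inf {v. v > 0 \<and>
      (\<integral>x. 1 / ((u - x)\<^sup>2 + v\<^sup>2) \<partial>cauchy_mu) \<le> 1 / s}"

definition G_s :: "real \<Rightarrow> real \<Rightarrow> real" where
  "G_s s u0 = (\<integral>x. (u0 - x) / ((u0 - x)\<^sup>2 + (v_s s u0)\<^sup>2) \<partial>cauchy_mu)"

definition f_ab :: "real \<Rightarrow> real \<Rightarrow> real \<Rightarrow> real" where
  "f_ab \<alpha> \<beta> u0 = u0 + (\<alpha> - \<beta>) * G_s (\<alpha> + \<beta>) u0"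

end

theory Submission
  imports Defs "HOL-Real_Asymp.Real_Asymp"
begin

text \<open>Both Poisson-type integrals of the Cauchy distribution are rational functions of \<open>u\<close> and \<open>v\<close>
  (partial fractions): \<open>\<integral> d\<mu>(x) / ((u-x)\<^sup>2+v\<^sup>2) = (1+v) / (v (u\<^sup>2+(1+v)\<^sup>2))\<close> and
  \<open>\<integral> (u-x) d\<mu>(x) / ((u-x)\<^sup>2+v\<^sup>2) = u / (u\<^sup>2+(1+v)\<^sup>2)\<close>. Hence \<open>v = v_s(u)\<close> is the unique
  positive root of \<open>u\<^sup>2 + (1+v)\<^sup>2 = s(1+v)/v\<close>, whose right-hand side minus \<open>(1+v)\<^sup>2\<close> is strictly
  decreasing in \<open>v\<close>, and \<open>G_s(u) = u v / (s(1+v))\<close>. Implicit differentiation gives \<open>G_s'\<close> and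
  \<open>f' = 1 + (\<alpha>-\<beta>) G_s'\<close> as rational functions of \<open>v\<close>; the numerator of \<open>f'\<close> is
  \<open>s\<^sup>2 + 2\<beta>sv + 4\<alpha>v\<^sup>2(1+v)\<^sup>2 > 0\<close>, so \<open>f\<close> is a strictly increasing diffeomorphism and the
  derivative of \<open>G_s \<circ> f\<^sup>-\<^sup>1\<close> is \<open>G_s'/f'\<close>.\<close>

section \<open>Poisson integrals of the Cauchy distribution\<close>

lemma integral_cauchy_mu:
  fixes g :: "real \<Rightarrow> real"
  assumes [measurable]: "g \<in> borel_measurable borel"
  shows "(\<integral>x. g x \<partial>cauchy_mu) = (\<integral>x. g x / (pi * (1 + x\<^sup>2)) \<partial>lborel)"
  unfolding cauchy_mu_def
  by (subst integral_density) (auto intro!: add_pos_nonneg)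

lemma integrable_cauchy_density_mult_bounded:
  fixes h :: "real \<Rightarrow> real"
  assumes "continuous_on UNIV h" and "\<And>x. \<bar>h x\<bar> \<le> M"
  shows "integrable lborel (\<lambda>x. h x / (pi * (1 + x\<^sup>2)))"
proof (rule Bochner_Integration.integrable_bound)
  show "integrable lborel (\<lambda>x. M / pi * inverse (1 + x\<^sup>2))"
    using integrable_inverse_1_plus_square by (simp add: set_integrable_def)
  show "(\<lambda>x. h x / (pi * (1 + x\<^sup>2))) \<in> borel_measurable lborel"
  proof -
    have [measurable]: "h \<in> borel_measurable borel"
      using assms(1) by (rule borel_measurable_continuous_onI)
    show ?thesis by measurable
  qed
  show "AE x in lborel. norm (h x / (pi * (1 + x\<^sup>2))) \<le> norm (M / pi * inverse (1 + x\<^sup>2))"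
  proof (rule AE_I2)
    fix x :: real
    have "M \<ge> 0" using assms(2)[of x] by linarith
    have "\<bar>h x\<bar> / (pi * (1 + x\<^sup>2)) \<le> M / (pi * (1 + x\<^sup>2))"
      using assms(2) by (intro divide_right_mono) (auto intro: add_pos_nonneg)
    with \<open>M \<ge> 0\<close> show "norm (h x / (pi * (1 + x\<^sup>2))) \<le> norm (M / pi * inverse (1 + x\<^sup>2))"
      by (simp add: abs_mult field_simps)
  qed
qed

lemma integral_lborel_FTC:
  fixes F f :: "real \<Rightarrow> real"
  assumes "\<And>x. (F has_real_derivative f x) (at x)" and "continuous_on UNIV f"
    and "integrable lborel f" and "(F \<longlongrightarrow> A) at_bot" and "(F \<longlongrightarrow> B) at_top"
  shows "(\<integral>x. f x \<partial>lborel) = B - A"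
proof -
  have "(LBINT x=-\<infinity>..\<infinity>. f x) = B - A"
  proof (rule interval_integral_FTC_integrable)
    show "set_integrable lborel (einterval (-\<infinity>) \<infinity>) f"
      using assms(3) by (simp add: set_integrable_def)
    show "((F \<circ> real_of_ereal) \<longlongrightarrow> A) (at_right (-\<infinity>))"
      using assms(4) unfolding ereal_tendsto_simps by simp
    show "((F \<circ> real_of_ereal) \<longlongrightarrow> B) (at_left \<infinity>)"
      using assms(5) unfolding ereal_tendsto_simps by simp
  qed (use assms(1,2) in \<open>auto simp: has_real_derivative_iff_has_vector_derivative[symmetric]
                                    continuous_on_eq_continuous_at\<close>)
  then show ?thesis by (simp add: interval_lebesgue_integral_def set_lebesgue_integral_def)
qed

lemma DERIV_partial_fractions_primitive:
  fixes A B E u v x :: real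
  assumes "v > 0"
  shows "((\<lambda>x. (A / 2 * (ln (1 + x\<^sup>2) - ln ((x - u)\<^sup>2 + v\<^sup>2))
                  + B * arctan x + E / v * arctan ((x - u) / v)) / pi)
           has_real_derivative
           ((A * x + B) / (1 + x\<^sup>2) + (E - A * (x - u)) / ((x - u)\<^sup>2 + v\<^sup>2)) / pi) (at x)"
    (is "(?F has_real_derivative _) _")
proof -
  have P: "1 + x\<^sup>2 > 0" and Q: "(x - u)\<^sup>2 + v\<^sup>2 > 0"
    using assms by (auto intro: add_pos_nonneg add_nonneg_pos)
  have "((\<lambda>x. ln (1 + x\<^sup>2)) has_real_derivative 2 * x / (1 + x\<^sup>2)) (at x)"
    and "((\<lambda>x. ln ((x - u)\<^sup>2 + v\<^sup>2)) has_real_derivative 2 * (x - u) / ((x - u)\<^sup>2 + v\<^sup>2)) (at x)"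
    using P Q by (auto intro!: derivative_eq_intros)
  moreover have "(arctan has_real_derivative 1 / (1 + x\<^sup>2)) (at x)"
    using DERIV_arctan[of x] by (simp add: divide_inverse)
  moreover have "((\<lambda>x. arctan ((x - u) / v)) has_real_derivative v / ((x - u)\<^sup>2 + v\<^sup>2)) (at x)"
  proof -
    have "((\<lambda>x. arctan ((x - u) / v)) has_real_derivative
            inverse (1 + ((x - u) / v)\<^sup>2) * (1 / v)) (at x)"
      using assms by (auto intro!: derivative_eq_intros)
    moreover have "inverse (1 + ((x - u) / v)\<^sup>2) * (1 / v) = v / ((x - u)\<^sup>2 + v\<^sup>2)"
      using assms Q by (simp add: field_simps power2_eq_square)
    ultimately show ?thesis by simp
  qed
  ultimately have deriv: "(?F has_real_derivative
      (A / 2 * (2 * x / (1 + x\<^sup>2) - 2 * (x - u) / ((x - u)\<^sup>2 + v\<^sup>2))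
        + B * (1 / (1 + x\<^sup>2)) + E / v * (v / ((x - u)\<^sup>2 + v\<^sup>2))) / pi) (at x)"
    by (intro DERIV_cdivide DERIV_add DERIV_cmult DERIV_diff)
  \<comment> \<open>abstract denominators keep the field simplifier from expanding them\<close>
  have key: "A / 2 * (2 * x / X - 2 * (x - u) / Y) + B * (1 / X) + E / v * (v / Y)
             = (A * x + B) / X + (E - A * (x - u)) / Y" if "X \<noteq> 0" and "Y \<noteq> 0" for X Y
    using that assms by (simp add: field_simps)
  have "A / 2 * (2 * x / (1 + x\<^sup>2) - 2 * (x - u) / ((x - u)\<^sup>2 + v\<^sup>2)) + B * (1 / (1 + x\<^sup>2))
          + E / v * (v / ((x - u)\<^sup>2 + v\<^sup>2))
        = (A * x + B) / (1 + x\<^sup>2) + (E - A * (x - u)) / ((x - u)\<^sup>2 + v\<^sup>2)"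
    by (rule key) (use P Q in auto)
  with deriv show ?thesis
    by (simp only:)
qed

lemma integral_lborel_partial_fractions:
  fixes A B E u v :: real
  assumes "v > 0" and "integrable lborel g"
    and g: "\<And>x. g x = ((A * x + B) / (1 + x\<^sup>2) + (E - A * (x - u)) / ((x - u)\<^sup>2 + v\<^sup>2)) / pi"
  shows "(\<integral>x. g x \<partial>lborel) = B + E / v"
proof -
  define F where "F x = (A / 2 * (ln (1 + x\<^sup>2) - ln ((x - u)\<^sup>2 + v\<^sup>2))
                         + B * arctan x + E / v * arctan ((x - u) / v)) / pi" for x
  have "(\<integral>x. g x \<partial>lborel) = (B + E / v) / 2 - (- (B + E / v) / 2)"
  proof (rule integral_lborel_FTC)
    show "(F has_real_derivative g x) (at x)" for x
      unfolding F_def g using \<open>v > 0\<close> by (rule DERIV_partial_fractions_primitive)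
    have "1 + x\<^sup>2 \<noteq> 0" and "(x - u)\<^sup>2 + v\<^sup>2 \<noteq> 0" for x
      using \<open>v > 0\<close> by (auto simp: add_nonneg_eq_0_iff)
    then show "continuous_on UNIV g"
      unfolding g by (intro continuous_intros) simp_all
    show "(F \<longlongrightarrow> - (B + E / v) / 2) at_bot"
      unfolding F_def using \<open>v > 0\<close> by (real_asymp simp: field_simps)
    show "(F \<longlongrightarrow> (B + E / v) / 2) at_top"
      unfolding F_def using \<open>v > 0\<close> by (real_asymp simp: field_simps)
  qed fact
  then show ?thesis
    by argo
qed

lemma DERIV_double_pole_primitive:
  fixes a b x :: real
  shows "((\<lambda>x. (a * (x / (1 + x\<^sup>2) + arctan x) + b * (1 / (1 + x\<^sup>2))) / (2 * pi))
           has_real_derivative (a - b * x) / (1 + x\<^sup>2)\<^sup>2 / pi) (at x)"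
    (is "(?F has_real_derivative _) _")
proof -
  have P: "1 + x\<^sup>2 > 0"
    by (intro add_pos_nonneg) auto
  have "((\<lambda>x. x / (1 + x\<^sup>2)) has_real_derivative (1 - x\<^sup>2) / (1 + x\<^sup>2)\<^sup>2) (at x)"
    and "((\<lambda>x. 1 / (1 + x\<^sup>2)) has_real_derivative - (2 * x) / (1 + x\<^sup>2)\<^sup>2) (at x)"
    using P by (auto intro!: derivative_eq_intros simp: field_simps power2_eq_square)
  moreover have "(arctan has_real_derivative 1 / (1 + x\<^sup>2)) (at x)"
    using DERIV_arctan[of x] by (simp add: divide_inverse)
  ultimately have deriv: "(?F has_real_derivative (a * ((1 - x\<^sup>2) / (1 + x\<^sup>2)\<^sup>2 + 1 / (1 + x\<^sup>2))
        + b * (- (2 * x) / (1 + x\<^sup>2)\<^sup>2)) / (2 * pi)) (at x)"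
    by (intro DERIV_cdivide DERIV_add DERIV_cmult)
  have key: "(a * ((1 - x\<^sup>2) / X\<^sup>2 + 1 / X) + b * (- (2 * x) / X\<^sup>2)) / (2 * pi)
             = (a - b * x) / X\<^sup>2 / pi" if "X \<noteq> 0" and "x\<^sup>2 = X - 1" for X
    using that by (simp add: field_simps power2_eq_square) algebra
  have "(a * ((1 - x\<^sup>2) / (1 + x\<^sup>2)\<^sup>2 + 1 / (1 + x\<^sup>2)) + b * (- (2 * x) / (1 + x\<^sup>2)\<^sup>2))
          / (2 * pi)
        = (a - b * x) / (1 + x\<^sup>2)\<^sup>2 / pi"
    by (rule key) (use P in auto)
  with deriv show ?thesis
    by (simp only:)
qed

lemma integral_lborel_double_pole:
  fixes a b :: real
  assumes "integrable lborel g" and g: "\<And>x. g x = (a - b * x) / (1 + x\<^sup>2)\<^sup>2 / pi"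
  shows "(\<integral>x. g x \<partial>lborel) = a / 2"
proof -
  define F where "F x = (a * (x / (1 + x\<^sup>2) + arctan x) + b * (1 / (1 + x\<^sup>2))) / (2 * pi)" for x
  have "(\<integral>x. g x \<partial>lborel) = a / 4 - (- a / 4)"
  proof (rule integral_lborel_FTC[OF _ _ assms(1)])
    show "(F has_real_derivative g x) (at x)" for x
      unfolding F_def g by (rule DERIV_double_pole_primitive)
    have "1 + x\<^sup>2 \<noteq> 0" for x :: real
      by (auto simp: add_nonneg_eq_0_iff)
    then show "continuous_on UNIV g"
      unfolding g by (intro continuous_intros) simp_all
    show "(F \<longlongrightarrow> - a / 4) at_bot"
      unfolding F_def by (real_asymp simp: field_simps)
    show "(F \<longlongrightarrow> a / 4) at_top"
      unfolding F_def by (real_asymp simp: field_simps)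
  qed
  then show ?thesis
    by simp
qed

lemma abs_kernel_combination_le:
  fixes a b u v x :: real
  assumes "v > 0"
  shows "\<bar>(a + b * (u - x)) / ((u - x)\<^sup>2 + v\<^sup>2)\<bar> \<le> \<bar>a\<bar> / v\<^sup>2 + \<bar>b\<bar> / v"
proof -
  have Q: "(u - x)\<^sup>2 + v\<^sup>2 > 0"
    using assms by (auto intro: add_nonneg_pos)
  have "\<bar>u - x\<bar> / ((u - x)\<^sup>2 + v\<^sup>2) \<le> 1 / v"
  proof -
    have "2 * (\<bar>u - x\<bar> * v) \<le> (u - x)\<^sup>2 + v\<^sup>2"
      using sum_squares_bound[of "\<bar>u - x\<bar>" v] by (simp add: power2_eq_square mult.assoc)
    moreover have "0 \<le> \<bar>u - x\<bar> * v"
      using assms by simp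
    ultimately show ?thesis
      using assms Q by (simp add: field_simps)
  qed
  then have "\<bar>b\<bar> * (\<bar>u - x\<bar> / ((u - x)\<^sup>2 + v\<^sup>2)) \<le> \<bar>b\<bar> * (1 / v)"
    by (rule mult_left_mono) simp
  then have b_part: "\<bar>b * (u - x)\<bar> / ((u - x)\<^sup>2 + v\<^sup>2) \<le> \<bar>b\<bar> / v"
    by (simp add: abs_mult)
  have a_part: "\<bar>a\<bar> / ((u - x)\<^sup>2 + v\<^sup>2) \<le> \<bar>a\<bar> / v\<^sup>2"
    using assms Q by (intro divide_left_mono) auto
  have "\<bar>(a + b * (u - x)) / ((u - x)\<^sup>2 + v\<^sup>2)\<bar> = \<bar>a + b * (u - x)\<bar> / ((u - x)\<^sup>2 + v\<^sup>2)"
    unfolding abs_divide using Q by simp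
  also have "\<dots> \<le> (\<bar>a\<bar> + \<bar>b * (u - x)\<bar>) / ((u - x)\<^sup>2 + v\<^sup>2)"
    using Q by (intro divide_right_mono abs_triangle_ineq) auto
  also have "\<dots> \<le> \<bar>a\<bar> / v\<^sup>2 + \<bar>b\<bar> / v"
    unfolding add_divide_distrib using a_part b_part by (rule add_mono)
  finally show ?thesis .
qed

lemma integral_lborel_kernel_distinct_poles:
  fixes a b u v :: real
  assumes "v > 0" and "\<not> (u = 0 \<and> v = 1)" and "integrable lborel g"
    and g: "\<And>x. g x = (a + b * (u - x)) / ((u - x)\<^sup>2 + v\<^sup>2) / (pi * (1 + x\<^sup>2))"
  shows "(\<integral>x. g x \<partial>lborel) = (a * (1 + v) + b * u * v) / (v * (u\<^sup>2 + (1 + v)\<^sup>2))"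
proof -
  have P: "1 + x\<^sup>2 \<noteq> 0" and Q: "(u - x)\<^sup>2 + v\<^sup>2 \<noteq> 0" for x
    using \<open>v > 0\<close> by (auto simp: add_nonneg_eq_0_iff)
  define D where "D = (u\<^sup>2 + (1 + v)\<^sup>2) * (u\<^sup>2 + (1 - v)\<^sup>2)"
  have "D \<noteq> 0"
    unfolding D_def using assms(1,2) by (auto simp: add_nonneg_eq_0_iff)
  define A where "A = 2 * u * a + (1 + u\<^sup>2 - v\<^sup>2) * b"
  define B where "B = u * (1 + u\<^sup>2 + v\<^sup>2) * b - (1 - u\<^sup>2 - v\<^sup>2) * a"
  define E where "E = (1 + u\<^sup>2 - v\<^sup>2) * a - 2 * u * v\<^sup>2 * b"
  have split: "N / Y / (pi * X) = ((A / D * x + B / D) / X + (E / D - A / D * (x - u)) / Y) / pi"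
    if "X \<noteq> 0" and "Y \<noteq> 0" and "(A * x + B) * Y + (E - A * (x - u)) * X = D * N" for N X Y x
  proof -
    have "((A / D * x + B / D) / X + (E / D - A / D * (x - u)) / Y) / pi
          = ((A * x + B) * Y + (E - A * (x - u)) * X) / (D * X * Y * pi)"
      using that(1,2) \<open>D \<noteq> 0\<close> by (simp add: field_simps)
    also have "\<dots> = N / Y / (pi * X)"
      using that \<open>D \<noteq> 0\<close> by simp
    finally show ?thesis ..
  qed
  have "(\<integral>x. g x \<partial>lborel) = B / D + E / D / v"
  proof (rule integral_lborel_partial_fractions[OF \<open>v > 0\<close> assms(3)])
    fix x
    have "(A * x + B) * ((u - x)\<^sup>2 + v\<^sup>2) + (E - A * (x - u)) * (1 + x\<^sup>2) = D * (a + b * (u - x))"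
      unfolding A_def B_def E_def D_def by algebra
    then show "g x = ((A / D * x + B / D) / (1 + x\<^sup>2)
                      + (E / D - A / D * (x - u)) / ((x - u)\<^sup>2 + v\<^sup>2)) / pi"
      unfolding g power2_commute[of x u] by (rule split[OF P Q])
  qed
  also have "\<dots> = (B * v + E) / (v * D)"
    using \<open>v > 0\<close> \<open>D \<noteq> 0\<close> by (simp add: field_simps)
  also have "B * v + E = (u\<^sup>2 + (1 - v)\<^sup>2) * (a * (1 + v) + b * u * v)"
    unfolding B_def E_def by algebra
  also have "(u\<^sup>2 + (1 - v)\<^sup>2) * (a * (1 + v) + b * u * v) / (v * D)
             = (a * (1 + v) + b * u * v) / (v * (u\<^sup>2 + (1 + v)\<^sup>2))"
    using \<open>D \<noteq> 0\<close> unfolding D_def by auto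
  finally show ?thesis .
qed

lemma integral_cauchy_mu_kernel:
  fixes a b u v :: real
  assumes "v > 0"
  shows "(\<integral>x. (a + b * (u - x)) / ((u - x)\<^sup>2 + v\<^sup>2) \<partial>cauchy_mu)
         = (a * (1 + v) + b * u * v) / (v * (u\<^sup>2 + (1 + v)\<^sup>2))"
proof -
  define h where "h x = (a + b * (u - x)) / ((u - x)\<^sup>2 + v\<^sup>2)" for x
  define g where "g x = h x / (pi * (1 + x\<^sup>2))" for x
  have "continuous_on UNIV h"
    unfolding h_def using \<open>v > 0\<close> by (intro continuous_intros) (auto simp: add_nonneg_eq_0_iff)
  then have g_int: "integrable lborel g"
    unfolding g_def h_def using abs_kernel_combination_le[OF \<open>v > 0\<close>]
    by (rule integrable_cauchy_density_mult_bounded)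
  have "(\<integral>x. h x \<partial>cauchy_mu) = (\<integral>x. g x \<partial>lborel)"
    unfolding g_def using \<open>continuous_on UNIV h\<close>
    by (intro integral_cauchy_mu borel_measurable_continuous_onI)
  also have "\<dots> = (a * (1 + v) + b * u * v) / (v * (u\<^sup>2 + (1 + v)\<^sup>2))"
  proof (cases "u = 0 \<and> v = 1")
    case True
    \<comment> \<open>the pole \<open>u + i v\<close> of the kernel is the pole \<open>i\<close> of the density\<close>
    have "g x = (a - b * x) / (1 + x\<^sup>2)\<^sup>2 / pi" for x
      unfolding g_def h_def using True by (simp add: ac_simps power2_eq_square)
    then have "(\<integral>x. g x \<partial>lborel) = a / 2"
      by (rule integral_lborel_double_pole[OF g_int])
    with True show ?thesis
      by simp
  next
    case False
    with \<open>v > 0\<close> show ?thesis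
      by (rule integral_lborel_kernel_distinct_poles[OF _ _ g_int]) (simp add: g_def h_def)
  qed
  finally show ?thesis
    unfolding h_def .
qed

lemma integral_cauchy_mu_poisson:
  "v > 0 \<Longrightarrow> (\<integral>x. 1 / ((u - x)\<^sup>2 + v\<^sup>2) \<partial>cauchy_mu) = (1 + v) / (v * (u\<^sup>2 + (1 + v)\<^sup>2))"
  using integral_cauchy_mu_kernel[of v 1 0 u] by simp

lemma integral_cauchy_mu_conjugate_poisson:
  "v > 0 \<Longrightarrow> (\<integral>x. (u - x) / ((u - x)\<^sup>2 + v\<^sup>2) \<partial>cauchy_mu) = u / (u\<^sup>2 + (1 + v)\<^sup>2)"
  using integral_cauchy_mu_kernel[of v 0 1 u] by simp

lemma has_real_derivative_inverse_strong:
  fixes f g :: "real \<Rightarrow> real"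
  assumes "(f has_real_derivative D) (at x)" and "D \<noteq> 0"
    and "open S" and "x \<in> S" and "continuous_on S f" and "\<And>z. z \<in> S \<Longrightarrow> g (f z) = z"
  shows "(g has_real_derivative inverse D) (at (f x))"
  using assms unfolding has_field_derivative_def
  by (intro has_derivative_inverse_strong[of S x f g]) (auto simp: fun_eq_iff)

lemma has_real_derivative_comp_inv:
  fixes F G :: "real \<Rightarrow> real"
  assumes F: "\<And>x. (F has_real_derivative F' x) (at x)" and F'_pos: "\<And>x. F' x > 0"
    and G: "(G has_real_derivative G') (at x)"
  shows "((\<lambda>y. G (inv F y)) has_real_derivative G' / F' x) (at (F x))"
proof -
  have "strict_mono F"
  proof (rule strict_monoI)
    show "F a < F b" if "a < b" for a b
      by (rule DERIV_pos_imp_increasing[OF that]) (use F F'_pos in blast)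
  qed
  then have inv_F: "inv F (F z) = z" for z
    by (simp add: strict_mono_imp_inj_on)
  have "(G has_real_derivative G') (at (inv F (F x)))"
    using G by (simp add: inv_F)
  moreover have "(inv F has_real_derivative inverse (F' x)) (at (F x))"
    using F F'_pos[of x] inv_F DERIV_continuous_on[OF F]
    by (intro has_real_derivative_inverse_strong[where S = UNIV]) auto
  ultimately show ?thesis
    using DERIV_chain2 by (fastforce simp: divide_inverse)
qed

section \<open>The level equation of \<open>v_s\<close>\<close>

definition vs_level :: "real \<Rightarrow> real \<Rightarrow> real" where
  "vs_level s v = s * (1 + v) / v - (1 + v)\<^sup>2"

text \<open>The inverse of \<open>vs_level s\<close> on \<open>{0<..}\<close>, written like \<open>v_s\<close> so that
  \<open>v_s s u = vs_level_inv s (u\<^sup>2)\<close> is immediate; being defined on all of \<open>\<real>\<close> it can be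
  differentiated at \<open>u = 0\<close> as well.\<close>
definition vs_level_inv :: "real \<Rightarrow> real \<Rightarrow> real" where
  "vs_level_inv s y = Inf {v. v > 0 \<and> vs_level s v \<le> y}"

lemma vs_level_eq: "v \<noteq> 0 \<Longrightarrow> vs_level s v = s + s / v - (1 + v)\<^sup>2"
  unfolding vs_level_def by (simp add: field_simps)

lemma vs_level_strict_antimono:
  assumes "s > 0" and "0 < a" and "a < b"
  shows "vs_level s b < vs_level s a"
proof -
  have "s / b < s / a"
    using assms by (intro divide_strict_left_mono) auto
  moreover have "(1 + a)\<^sup>2 < (1 + b)\<^sup>2"
    using assms by (intro power_strict_mono) auto
  ultimately show ?thesis
    using assms by (simp add: vs_level_eq)
qed

lemma vs_level_has_derivative:
  assumes "v > 0"
  shows "(vs_level s has_real_derivative - s / v\<^sup>2 - 2 * (1 + v)) (at v)"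
proof -
  have "((\<lambda>v. s + s / v - (1 + v)\<^sup>2) has_real_derivative - s / v\<^sup>2 - 2 * (1 + v)) (at v)"
    using assms by (auto intro!: derivative_eq_intros simp: field_simps power2_eq_square)
  then show ?thesis
    by (rule has_field_derivative_transform_within_open[where S = "{0<..}"])
       (use assms in \<open>auto simp: vs_level_eq\<close>)
qed

lemma isCont_vs_level: "v > 0 \<Longrightarrow> isCont (vs_level s) v"
  using vs_level_has_derivative DERIV_isCont by blast

lemma vs_level_surj:
  assumes "s > 0"
  obtains r where "r > 0" and "vs_level s r = y"
proof -
  define a where "a = min 1 (s / (\<bar>y\<bar> + 4))"
  define b where "b = 1 + 2 * s + \<bar>y\<bar>"
  have "a > 0" and "a \<le> 1" and "a \<le> b" and "b \<ge> 1"
    using assms by (auto simp: a_def b_def)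
  have "y \<le> vs_level s a"
  proof -
    have "a \<le> s / (\<bar>y\<bar> + 4)"
      by (simp add: a_def)
    then have "a * (\<bar>y\<bar> + 4) \<le> s"
      by (simp add: field_simps)
    then have "\<bar>y\<bar> + 4 \<le> s / a"
      using \<open>a > 0\<close> by (simp add: field_simps)
    moreover have "(1 + a)\<^sup>2 \<le> 2\<^sup>2"
      using \<open>a > 0\<close> \<open>a \<le> 1\<close> by (intro power_mono) auto
    ultimately show ?thesis
      using \<open>a > 0\<close> assms by (simp add: vs_level_eq)
  qed
  moreover have "vs_level s b \<le> y"
  proof -
    have "s / b \<le> s" and "b \<le> (1 + b)\<^sup>2"
      using assms \<open>b \<ge> 1\<close> by (simp_all add: field_simps power2_eq_square)
    then show ?thesis
      using \<open>b \<ge> 1\<close> by (simp add: vs_level_eq b_def)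
  qed
  moreover have "isCont (vs_level s) x" if "a \<le> x" for x
    using isCont_vs_level \<open>a > 0\<close> that by simp
  ultimately obtain r where "a \<le> r" and "vs_level s r = y"
    using IVT2[of "vs_level s" b y a] \<open>a \<le> b\<close> by auto
  show ?thesis
    by (rule that[of r]) (use \<open>a > 0\<close> \<open>a \<le> r\<close> \<open>vs_level s r = y\<close> in auto)
qed

lemma vs_level_sublevel_set:
  assumes "s > 0" and "r > 0"
  shows "{v. v > 0 \<and> vs_level s v \<le> vs_level s r} = {r..}"
proof (intro set_eqI iffI)
  fix v assume "v \<in> {v. v > 0 \<and> vs_level s v \<le> vs_level s r}"
  then show "v \<in> {r..}"
    using vs_level_strict_antimono[OF \<open>s > 0\<close>, of v r] by force
next
  fix v assume "v \<in> {r..}"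
  then show "v \<in> {v. v > 0 \<and> vs_level s v \<le> vs_level s r}"
    using assms vs_level_strict_antimono[OF \<open>s > 0\<close>, of r v] by (cases "v = r") auto
qed

lemma vs_level_inv_vs_level:
  assumes "s > 0" and "r > 0"
  shows "vs_level_inv s (vs_level s r) = r"
  unfolding vs_level_inv_def vs_level_sublevel_set[OF assms] by simp

lemma vs_level_inv:
  assumes "s > 0"
  shows "vs_level_inv s y > 0" and "vs_level s (vs_level_inv s y) = y"
proof -
  obtain r where "r > 0" and "vs_level s r = y"
    using vs_level_surj[OF assms] .
  moreover from this have "vs_level_inv s y = r"
    using vs_level_inv_vs_level[OF assms] by blast
  ultimately show "vs_level_inv s y > 0" and "vs_level s (vs_level_inv s y) = y"
    by simp_all
qed

lemma vs_level_inv_has_derivative: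
  assumes "s > 0"
  shows "(vs_level_inv s has_real_derivative
           inverse (- s / (vs_level_inv s y)\<^sup>2 - 2 * (1 + vs_level_inv s y))) (at y)"
proof -
  define r where "r = vs_level_inv s y"
  have "r > 0" and "vs_level s r = y"
    using vs_level_inv[OF assms] by (simp_all add: r_def)
  have "s / r\<^sup>2 > 0"
    using assms \<open>r > 0\<close> by simp
  then have "- s / r\<^sup>2 - 2 * (1 + r) \<noteq> 0"
    using \<open>r > 0\<close> by simp
  moreover have "continuous_on {0<..} (vs_level s)"
    using isCont_vs_level by (simp add: continuous_at_imp_continuous_on)
  ultimately have "(vs_level_inv s has_real_derivative inverse (- s / r\<^sup>2 - 2 * (1 + r)))
                     (at (vs_level s r))"
    using vs_level_has_derivative[OF \<open>r > 0\<close>] \<open>r > 0\<close> vs_level_inv_vs_level[OF assms]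
    by (intro has_real_derivative_inverse_strong[where S = "{0<..}"]) auto
  then show ?thesis using \<open>vs_level s r = y\<close> by (simp add: r_def)
qed

lemma v_s_eq_vs_level_inv:
  assumes "s > 0"
  shows "v_s s u = vs_level_inv s (u\<^sup>2)"
proof -
  have "(1 + v) / (v * (u\<^sup>2 + (1 + v)\<^sup>2)) \<le> 1 / s \<longleftrightarrow> vs_level s v \<le> u\<^sup>2" if "v > 0" for v
  proof -
    have "v * (u\<^sup>2 + (1 + v)\<^sup>2) > 0"
      using that by (intro mult_pos_pos add_nonneg_pos) auto
    then show ?thesis
      using that assms unfolding vs_level_def by (simp add: field_simps)
  qed
  then have "{v. v > 0 \<and> (\<integral>x. 1 / ((u - x)\<^sup>2 + v\<^sup>2) \<partial>cauchy_mu) \<le> 1 / s}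
             = {v. v > 0 \<and> vs_level s v \<le> u\<^sup>2}"
    by (auto simp: integral_cauchy_mu_poisson)
  then show ?thesis
    unfolding v_s_def vs_level_inv_def by simp
qed

lemma v_s_pos: "s > 0 \<Longrightarrow> v_s s u > 0"
  by (simp add: v_s_eq_vs_level_inv vs_level_inv)

lemma v_s_level: "s > 0 \<Longrightarrow> vs_level s (v_s s u) = u\<^sup>2"
  by (simp add: v_s_eq_vs_level_inv vs_level_inv)

lemma G_s_eq:
  assumes "s > 0"
  shows "G_s s u = u * v_s s u / (s * (1 + v_s s u))"
proof -
  define v where "v = v_s s u"
  have "v > 0" and level: "vs_level s v = u\<^sup>2"
    using v_s_pos[OF assms] v_s_level[OF assms] by (simp_all add: v_def)
  have "G_s s u = u / (u\<^sup>2 + (1 + v)\<^sup>2)"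
    unfolding G_s_def v_def[symmetric] using \<open>v > 0\<close> by (rule integral_cauchy_mu_conjugate_poisson)
  also have "u\<^sup>2 + (1 + v)\<^sup>2 = s * (1 + v) / v"
    using level by (simp add: vs_level_def)
  also have "u / (s * (1 + v) / v) = u * v / (s * (1 + v))"
    by simp
  finally show ?thesis
    unfolding v_def .
qed

section \<open>Derivatives of \<open>G_s\<close> and \<open>f_ab\<close>\<close>

definition G_s_deriv :: "real \<Rightarrow> real \<Rightarrow> real" where
  "G_s_deriv s u = (let v = v_s s u in
     v * (2 * v * (1 + v)\<^sup>2 - s) / (s * (1 + v) * (s + 2 * v\<^sup>2 * (1 + v))))"

definition f_ab_deriv :: "real \<Rightarrow> real \<Rightarrow> real \<Rightarrow> real" where
  "f_ab_deriv \<alpha> \<beta> u = (let s = \<alpha> + \<beta>; v = v_s s u in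
     ((1 + v) * (s\<^sup>2 + 4 * \<alpha> * v\<^sup>2 * (1 + v)) - (\<alpha> - \<beta>) * s * v)
     / (s * (1 + v) * (s + 2 * v\<^sup>2 * (1 + v))))"

lemma v_s_has_derivative:
  assumes "s > 0"
  shows "(v_s s has_real_derivative 2 * u / (- s / (v_s s u)\<^sup>2 - 2 * (1 + v_s s u))) (at u)"
proof -
  have "((\<lambda>u. u\<^sup>2) has_real_derivative 2 * u) (at u)"
    by (auto intro!: derivative_eq_intros)
  from DERIV_chain2[OF vs_level_inv_has_derivative[OF assms] this]
  show ?thesis
    by (simp add: v_s_eq_vs_level_inv[OF assms, abs_def] divide_inverse mult.commute)
qed

lemma G_s_has_derivative:
  assumes "s > 0"
  shows "(G_s s has_real_derivative G_s_deriv s u) (at u)"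
proof -
  define v where "v = v_s s u"
  define K where "K = s + 2 * v\<^sup>2 * (1 + v)"
  define v' where "v' = 2 * u / (- s / v\<^sup>2 - 2 * (1 + v))"
  have "v > 0" and "vs_level s v = u\<^sup>2"
    using v_s_pos[OF assms] v_s_level[OF assms] by (simp_all add: v_def)
  then have level: "u\<^sup>2 * v = (1 + v) * (s - v * (1 + v))"
    by (simp add: vs_level_def field_simps power2_eq_square)
  have "K > 0"
    using \<open>v > 0\<close> \<open>s > 0\<close> by (simp add: K_def add_pos_nonneg)
  have v': "v' = - 2 * u * v\<^sup>2 / K"
    using \<open>v > 0\<close> \<open>K > 0\<close> by (simp add: v'_def K_def field_simps)
  have "G_s s = (\<lambda>u. u * v_s s u / (s * (1 + v_s s u)))"
    using G_s_eq[OF assms] by blast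
  moreover have "((\<lambda>u. u * v_s s u / (s * (1 + v_s s u))) has_real_derivative
          ((v + u * v') * (s * (1 + v)) - u * v * (s * v')) / (s * (1 + v) * (s * (1 + v)))) (at u)"
    using v_s_has_derivative[OF assms, of u] v_s_pos[OF assms, of u] assms
    unfolding v_def[symmetric] v'_def[symmetric]
    by (auto intro!: derivative_eq_intros simp: v_def ac_simps)
  moreover have "(v + u * v') * (s * (1 + v)) - u * v * (s * v')
                 = s * (1 + v) * (v * (2 * v * (1 + v)\<^sup>2 - s) / K)"
    unfolding v' using \<open>K > 0\<close> apply (simp add: field_simps)
    using level K_def by algebra
  ultimately show ?thesis
    using \<open>v > 0\<close> \<open>s > 0\<close> unfolding G_s_deriv_def v_def[symmetric] K_def Let_def
    by (simp add: ac_simps)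
qed

lemma f_ab_has_derivative:
  assumes "\<alpha> + \<beta> > 0"
  shows "(f_ab \<alpha> \<beta> has_real_derivative f_ab_deriv \<alpha> \<beta> u) (at u)"
proof -
  define s where "s = \<alpha> + \<beta>"
  define v where "v = v_s s u"
  define K where "K = s * (1 + v) * (s + 2 * v\<^sup>2 * (1 + v))"
  have "v > 0"
    using v_s_pos assms by (simp add: v_def s_def)
  then have "K > 0"
    using assms by (simp add: K_def s_def add_pos_nonneg)
  have "(f_ab \<alpha> \<beta> has_real_derivative 1 + (\<alpha> - \<beta>) * G_s_deriv (\<alpha> + \<beta>) u) (at u)"
    using G_s_has_derivative[OF assms, of u]
    unfolding f_ab_def[abs_def] by (auto intro!: derivative_eq_intros)
  moreover have "1 + (\<alpha> - \<beta>) * (v * (2 * v * (1 + v)\<^sup>2 - s) / K)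
                 = ((1 + v) * (s\<^sup>2 + 4 * \<alpha> * v\<^sup>2 * (1 + v)) - (\<alpha> - \<beta>) * s * v) / K"
    using \<open>K > 0\<close> apply (simp add: field_simps)
    unfolding K_def s_def by algebra
  ultimately show ?thesis
    unfolding G_s_deriv_def f_ab_deriv_def Let_def s_def[symmetric] v_def[symmetric] K_def
    by simp
qed

lemma f_ab_deriv_pos:
  assumes "\<alpha> \<ge> 0" and "\<beta> > 0"
  shows "f_ab_deriv \<alpha> \<beta> u > 0"
proof -
  define s where "s = \<alpha> + \<beta>"
  define v where "v = v_s s u"
  have "s > 0" and "v > 0"
    using assms v_s_pos[of s] by (simp_all add: s_def v_def)
  have "(1 + v) * (s\<^sup>2 + 4 * \<alpha> * v\<^sup>2 * (1 + v)) - (\<alpha> - \<beta>) * s * v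
        = s\<^sup>2 + 2 * \<beta> * s * v + 4 * \<alpha> * v\<^sup>2 * (1 + v)\<^sup>2"
    unfolding s_def by (simp add: algebra_simps power2_eq_square)
  moreover have "s\<^sup>2 > 0" and "2 * \<beta> * s * v \<ge> 0" and "4 * \<alpha> * v\<^sup>2 * (1 + v)\<^sup>2 \<ge> 0"
    using assms \<open>s > 0\<close> \<open>v > 0\<close> by simp_all
  ultimately have "(1 + v) * (s\<^sup>2 + 4 * \<alpha> * v\<^sup>2 * (1 + v)) - (\<alpha> - \<beta>) * s * v > 0"
    by linarith
  moreover have "s * (1 + v) * (s + 2 * v\<^sup>2 * (1 + v)) > 0"
    using \<open>s > 0\<close> \<open>v > 0\<close> by (simp add: add_pos_nonneg)
  ultimately show ?thesis
    unfolding f_ab_deriv_def Let_def s_def[symmetric] v_def[symmetric] by simp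
qed

theorem lemma6p8:
  fixes \<alpha> \<beta> u0 :: real
  assumes "\<alpha> \<ge> 0" and "\<beta> > 0"
  shows "((\<lambda>u. G_s (\<alpha> + \<beta>) (inv (f_ab \<alpha> \<beta>) u)) has_real_derivative
           (let s = \<alpha> + \<beta>; v = v_s (\<alpha> + \<beta>) u0 in
              v * (- s + 2 * v * (1 + v)\<^sup>2) /
              ((1 + v) * (s\<^sup>2 + 4 * \<alpha> * v\<^sup>2 * (1 + v)) - (\<alpha> - \<beta>) * s * v)))
         (at (f_ab \<alpha> \<beta> u0))"
proof -
  define s where "s = \<alpha> + \<beta>"
  define v where "v = v_s s u0"
  define K where "K = s * (1 + v) * (s + 2 * v\<^sup>2 * (1 + v))"
  have "\<alpha> + \<beta> > 0"
    using assms by simp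
  then have "s > 0"
    by (simp add: s_def)
  then have "v > 0"
    using v_s_pos by (simp add: v_def)
  with \<open>s > 0\<close> have "K > 0"
    by (simp add: K_def add_pos_nonneg)
  have "((\<lambda>u. G_s s (inv (f_ab \<alpha> \<beta>) u)) has_real_derivative
          G_s_deriv s u0 / f_ab_deriv \<alpha> \<beta> u0) (at (f_ab \<alpha> \<beta> u0))"
    using f_ab_has_derivative[OF \<open>\<alpha> + \<beta> > 0\<close>] f_ab_deriv_pos[OF assms]
      G_s_has_derivative[OF \<open>\<alpha> + \<beta> > 0\<close>]
    unfolding s_def by (rule has_real_derivative_comp_inv)
  also have "G_s_deriv s u0 / f_ab_deriv \<alpha> \<beta> u0
             = v * (- s + 2 * v * (1 + v)\<^sup>2) /
               ((1 + v) * (s\<^sup>2 + 4 * \<alpha> * v\<^sup>2 * (1 + v)) - (\<alpha> - \<beta>) * s * v)"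
    using \<open>K > 0\<close>
    unfolding G_s_deriv_def f_ab_deriv_def Let_def s_def[symmetric] v_def[symmetric] K_def[symmetric]
    by simp
  finally show ?thesis
    unfolding Let_def s_def v_def .
qed

end
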